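(* Let $k=3$ and $\alpha=(\tfrac12,\tfrac13,\tfrac15)$. Then every $\alpha$-communal triple is (uniquely) a nonnegative integer combination of $[7,5,3]$, $[5,3,2]$, $[3,2,1]$, and the number $f(g)$ of $\alpha$-communal triples with entries summing to $g$ satisfies \[ \sum_{g\ge0}f(g)x^g=\frac{1}{(1-x^{15})(1-x^{10})(1-x^{6})},\qquad f(g)=\binom{\lfloor g/2\rfloor+\lfloor g/3\rfloor+\lfloor g/5\rfloor-g+2}{2}. \]
   Context: A triple $[g_1,g_2,g_3]$ of integers is $\alpha$-communal if $0\le g_i\le\alpha_i(g_1+g_2+g_3)$ for $i=1,2,3$. Binomial coefficients $\binom{n}{r}$ are $0$ for $0\le n<r$. *)

theory Defs
  imports Main "HOL-Computational_Algebra.Formal_Power_Series"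
begin

definition communal :: "real \<times> real \<times> real \<Rightarrow> int \<times> int \<times> int \<Rightarrow> bool" where
  "communal \<alpha> g \<longleftrightarrow>
     (case \<alpha> of (a1, a2, a3) \<Rightarrow> case g of (g1, g2, g3) \<Rightarrow>
        0 \<le> g1 \<and> real_of_int g1 \<le> a1 * real_of_int (g1 + g2 + g3) \<and>
        0 \<le> g2 \<and> real_of_int g2 \<le> a2 * real_of_int (g1 + g2 + g3) \<and>
        0 \<le> g3 \<and> real_of_int g3 \<le> a3 * real_of_int (g1 + g2 + g3))"

definition communal_count :: "real \<times> real \<times> real \<Rightarrow> nat \<Rightarrow> nat" where
  "communal_count \<alpha> g =
     card {(g1, g2, g3). communal \<alpha> (g1, g2, g3) \<and> g1 + g2 + g3 = int g}"

end

theory Submission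
  imports Defs
begin

(* The
   linear map (a,b,c) |-> a [7,5,3] + b [5,3,2] + c [3,2,1] is unimodular, and its inverse
   maps exactly the communal triples to nonnegative integer triples; this gives the unique
   decomposition.  Since the generators have entry sums 15, 10, 6, the number of communal
   triples with sum g equals the number of solutions of 15a + 10b + 6c = g, whose generating
   function is 1/((1-x^15)(1-x^10)(1-x^6)).  Independently, the communal triples with sum g
   are the lattice points of the box with sides floor(g/2), floor(g/3), floor(g/5) on the
   plane of sum g; reflecting the box identifies them with the triples of naturals with sum
   floor(g/2) + floor(g/3) + floor(g/5) - g, which gives the binomial formula. *)

lemma fps_one_minus_X_power_mult:
  fixes f g :: "nat \<Rightarrow> nat"
  assumes rec: "\<And>n. f n = g n + (if p \<le> n then f (n - p) else 0)"
  shows "(1 - fps_X ^ p) * Abs_fps (\<lambda>n. of_nat (f n) :: 'a :: comm_ring_1)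
           = Abs_fps (\<lambda>n. of_nat (g n))"
proof (rule fps_ext)
  fix n
  have "fps_nth ((1 - fps_X ^ p) * Abs_fps (\<lambda>n. of_nat (f n) :: 'a)) n
          = of_nat (f n) - (if n < p then 0 else of_nat (f (n - p)))"
    by (simp add: algebra_simps fps_X_power_mult_nth)
  also have "\<dots> = of_nat (g n)"
    using arg_cong[OF rec[of n], of "of_nat :: nat \<Rightarrow> 'a"] by (auto split: if_splits)
  finally show "fps_nth ((1 - fps_X ^ p) * Abs_fps (\<lambda>n. of_nat (f n) :: 'a)) n
                  = fps_nth (Abs_fps (\<lambda>n. of_nat (g n))) n" by simp
qed

lemma finite_weighted_solutions:
  fixes w :: "'a \<Rightarrow> nat"
  assumes "p > 0" and fin: "\<And>m. finite {x. w x = m}"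
  shows "finite {(a, x). p * a + w x = n}"
proof (rule finite_subset)
  have "a \<le> n \<and> w x \<le> n" if "p * a + w x = n" for a x
  proof -
    have "a \<le> p * a" using \<open>p > 0\<close> by simp
    then show ?thesis using that by linarith
  qed
  then show "{(a, x). p * a + w x = n} \<subseteq> {..n} \<times> (\<Union>m\<le>n. {x. w x = m})" by auto
  show "finite ({..n} \<times> (\<Union>m\<le>n. {x. w x = m}))" using fin by blast
qed

(* Peeling off the new coordinate: the solutions of p*a + w(x) = n either have a = 0,
   or arise from a solution for n - p by increasing a. *)
lemma card_weighted_solutions_peel:
  fixes w :: "'a \<Rightarrow> nat"
  assumes "p > 0" and fin: "\<And>m. finite {x. w x = m}"
  shows "card {(a, x). p * a + w x = n} =
           card {x. w x = n} + (if p \<le> n then card {(a, x). p * a + w x = n - p} else 0)"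
proof -
  define S where "S m = {(a, x). p * a + w x = m}" for m
  define R where "R = (if p \<le> n then S (n - p) else {})"
  have split: "S n = (\<lambda>x. (0, x)) ` {x. w x = n} \<union> (\<lambda>(a, x). (Suc a, x)) ` R"
  proof (rule set_eqI, clarify)
    fix a x
    show "((a, x) \<in> S n) = ((a, x) \<in> (\<lambda>x. (0, x)) ` {x. w x = n} \<union> (\<lambda>(a, x). (Suc a, x)) ` R)"
      by (cases a) (force simp: S_def R_def image_iff)+
  qed
  have "finite R" using finite_weighted_solutions[OF assms] by (simp add: R_def S_def)
  moreover have "inj_on (\<lambda>(a, x). (Suc a, x)) R" by (auto simp: inj_on_def)
  ultimately have "card (S n) = card {x. w x = n} + card R"
    unfolding split using fin by (subst card_Un_disjoint) (auto simp: card_image inj_on_def)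
  then show ?thesis by (simp add: S_def R_def)
qed

lemma card_multiples:
  assumes "r > 0"
  shows "card {c :: nat. r * c = n} = (if r dvd n then 1 else 0)"
proof -
  have "{c. r * c = n} = (if r dvd n then {n div r} else {})" using assms by auto
  then show ?thesis by simp
qed

(* Each coordinate is peeled off in turn and contributes one factor (1 - X^weight). *)
theorem denumerant_fps:
  fixes p q r :: nat
  assumes "p > 0" "q > 0" "r > 0"
  shows "Abs_fps (\<lambda>n. of_nat (card {(a, b, c). p * a + q * b + r * c = n}) :: 'a :: field)
           = inverse ((1 - fps_X ^ p) * (1 - fps_X ^ q) * (1 - fps_X ^ r))"
proof -
  define w1 :: "nat \<Rightarrow> nat" where "w1 = (\<lambda>c. r * c)"
  define w2 :: "nat \<times> nat \<Rightarrow> nat" where "w2 = (\<lambda>(b, c). q * b + w1 c)"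
  have card1: "card {c. w1 c = n} = (if n = 0 then 1 else 0) + (if r \<le> n then card {c. w1 c = n - r} else 0)" for n
  proof (cases "r \<le> n")
    case True
    then show ?thesis using \<open>r > 0\<close> by (simp add: w1_def card_multiples dvd_minus_self)
  next
    case False
    then have "r dvd n \<longleftrightarrow> n = 0" using dvd_imp_le[of r n] by auto
    then show ?thesis using False \<open>r > 0\<close> by (simp add: w1_def card_multiples)
  qed
  have fin1: "finite {c. w1 c = m}" for m
    by (rule finite_subset[of _ "{m div r}"]) (use \<open>r > 0\<close> in \<open>auto simp: w1_def\<close>)
  have pairs: "{x. w2 x = n} = {(b, c). q * b + w1 c = n}" for n
    by (auto simp: w2_def)
  have fin2: "finite {x. w2 x = m}" for m
    unfolding pairs by (rule finite_weighted_solutions[OF \<open>q > 0\<close> fin1])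
  have triples: "{(a, b, c). p * a + q * b + r * c = n} = {(a, x). p * a + w2 x = n}" for n
    by (auto simp: w1_def w2_def)
  define F3 where "F3 = Abs_fps (\<lambda>n. of_nat (card {(a, x). p * a + w2 x = n}) :: 'a)"
  define F2 where "F2 = Abs_fps (\<lambda>n. of_nat (card {x. w2 x = n}) :: 'a)"
  define F1 where "F1 = Abs_fps (\<lambda>n. of_nat (card {c. w1 c = n}) :: 'a)"
  have eq3: "(1 - fps_X ^ p) * F3 = F2"
    unfolding F3_def F2_def
    by (rule fps_one_minus_X_power_mult, rule card_weighted_solutions_peel[OF \<open>p > 0\<close> fin2])
  have eq2: "(1 - fps_X ^ q) * F2 = F1"
    unfolding F2_def F1_def pairs
    by (rule fps_one_minus_X_power_mult, rule card_weighted_solutions_peel[OF \<open>q > 0\<close> fin1])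
  have eq1: "(1 - fps_X ^ r) * F1 = 1"
  proof -
    have "(1 - fps_X ^ r) * F1 = Abs_fps (\<lambda>n. of_nat (if n = 0 then 1 else 0))"
      unfolding F1_def by (rule fps_one_minus_X_power_mult, rule card1)
    also have "\<dots> = 1" by (rule fps_ext) simp
    finally show ?thesis .
  qed
  have "((1 - fps_X ^ p) * (1 - fps_X ^ q) * (1 - fps_X ^ r)) * F3
          = (1 - fps_X ^ r) * ((1 - fps_X ^ q) * ((1 - fps_X ^ p) * F3))"
    by (simp only: mult.assoc mult.commute mult.left_commute)
  also have "\<dots> = 1" by (simp only: eq3 eq2 eq1)
  finally show ?thesis unfolding triples F3_def by (rule fps_inverse_unique[symmetric])
qed

(* There are (n+2 choose 2) triples of naturals with sum n; the weight-one case
   of the peeling recursion reduces this to Pascal's rule. *)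
lemma card_simplex: "card {(a, b, c). a + b + (c :: nat) = n} = (n + 2) choose 2"
proof (induction n)
  case 0
  have "{(a, b, c). a + b + (c :: nat) = 0} = {(0, 0, 0)}" by auto
  then show ?case by (simp add: numeral_2_eq_2)
next
  case (Suc n)
  define w :: "nat \<times> nat \<Rightarrow> nat" where "w = (\<lambda>(b, c). b + c)"
  have pairs: "{x. w x = m} = (\<lambda>b. (b, m - b)) ` {..m}" for m by (auto simp: w_def image_iff)
  have card_pairs: "card {x. w x = m} = m + 1" for m
    unfolding pairs by (subst card_image) (auto simp: inj_on_def)
  have fin_pairs: "finite {x. w x = m}" for m
    unfolding pairs by simp
  have triples: "{(a, b, c). a + b + (c :: nat) = m} = {(a, x). 1 * a + w x = m}" for m
    by (auto simp: w_def)
  have "card {(a, x). 1 * a + w x = Suc n} = (n + 2) + ((n + 2) choose 2)"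
    using card_weighted_solutions_peel[of 1 w "Suc n", OF _ fin_pairs] Suc.IH
    by (simp add: card_pairs triples)
  also have "\<dots> = (Suc n + 2) choose 2" by (simp add: numeral_2_eq_2)
  finally show ?case by (simp add: triples)
qed

(* With deficit m = u1 + u2 + u3 - s not exceeding any u_i, the substitution
   x = u1 - h1, y = u2 - h2, z = u3 - h3 identifies them with triples of naturals with
   sum m, so there are (m+2 choose 2) of them (none if m < 0). *)
lemma card_box_slice:
  fixes u1 u2 u3 s :: int
  defines "m \<equiv> u1 + u2 + u3 - s"
  assumes "m \<le> u1" "m \<le> u2" "m \<le> u3"
  shows "card {(x, y, z). 0 \<le> x \<and> x \<le> u1 \<and> 0 \<le> y \<and> y \<le> u2 \<and> 0 \<le> z \<and> z \<le> u3
                          \<and> x + y + z = s} = nat (m + 2) choose 2"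
    (is "card ?S = _")
proof (cases "m < 0")
  case True
  then have "?S = {}" by (auto simp: m_def)
  moreover have "nat (m + 2) < 2" using True by simp
  ultimately show ?thesis by (metis card.empty binomial_eq_0)
next
  case False
  define F where "F = (\<lambda>(a, b, c). (u1 - int a, u2 - int b, u3 - int c))"
  have "?S = F ` {(a, b, c). a + b + c = nat m}"
  proof
    show "?S \<subseteq> F ` {(a, b, c). a + b + c = nat m}"
    proof
      fix t assume "t \<in> ?S"
      then obtain x y z where t: "t = (x, y, z)" and "(x, y, z) \<in> ?S" by (cases t) blast
      then have "t = F (nat (u1 - x), nat (u2 - y), nat (u3 - z))"
            and "nat (u1 - x) + nat (u2 - y) + nat (u3 - z) = nat m"
        by (auto simp: F_def m_def)
      then show "t \<in> F ` {(a, b, c). a + b + c = nat m}" by blast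
    qed
    show "F ` {(a, b, c). a + b + c = nat m} \<subseteq> ?S"
      using False assms by (auto simp: F_def m_def)
  qed
  moreover have "inj F" by (auto simp: F_def inj_def)
  ultimately have "card ?S = card {(a, b, c). a + b + (c :: nat) = nat m}"
    by (simp add: card_image inj_on_subset)
  also have "\<dots> = nat (m + 2) choose 2"
    using False by (simp add: card_simplex nat_add_distrib)
  finally show ?thesis .
qed

lemma communal_unit_fractions_iff:
  fixes k1 k2 k3 :: real
  assumes "k1 > 0" "k2 > 0" "k3 > 0"
  shows "communal (1 / k1, 1 / k2, 1 / k3) (g1, g2, g3) \<longleftrightarrow>
           0 \<le> g1 \<and> k1 * of_int g1 \<le> of_int (g1 + g2 + g3) \<and>
           0 \<le> g2 \<and> k2 * of_int g2 \<le> of_int (g1 + g2 + g3) \<and>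
           0 \<le> g3 \<and> k3 * of_int g3 \<le> of_int (g1 + g2 + g3)"
  using assms by (simp add: communal_def field_simps)

lemma communal_alpha_iff:
  "communal (1/2, 1/3, 1/5) (g1, g2, g3) \<longleftrightarrow>
     0 \<le> g1 \<and> 0 \<le> g2 \<and> 0 \<le> g3 \<and>
     2 * g1 \<le> g1 + g2 + g3 \<and> 3 * g2 \<le> g1 + g2 + g3 \<and> 5 * g3 \<le> g1 + g2 + g3"
  using communal_unit_fractions_iff[of 2 3 5 g1 g2 g3] by linarith

definition generated :: "nat \<times> nat \<times> nat \<Rightarrow> int \<times> int \<times> int" where
  "generated = (\<lambda>(a, b, c). (7 * int a + 5 * int b + 3 * int c,
                              5 * int a + 3 * int b + 2 * int c,
                              3 * int a + 2 * int b + int c))"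

(* The generators are linearly independent (their matrix has determinant 1). *)
lemma inj_generated: "inj generated"
  by (auto simp: inj_def generated_def)

lemma sum_generated:
  "generated (a, b, c) = (g1, g2, g3) \<Longrightarrow> g1 + g2 + g3 = int (15 * a + 10 * b + 6 * c)"
  by (auto simp: generated_def)

(* The alpha-communal triples are exactly the combinations of the generators: inverting
   the unimodular matrix gives a = g2 + g3 - g1, b = g1 - 2 g2 + g3, c = g1 + g2 - 4 g3,
   and these are nonnegative precisely under the communality inequalities. *)
lemma communal_alpha_iff_generated:
  "communal (1/2, 1/3, 1/5) g \<longleftrightarrow> g \<in> range generated"
proof (cases g)
  case (fields g1 g2 g3)
  show ?thesis
  proof
    assume "communal (1/2, 1/3, 1/5) g"
    then have "g = generated (nat (g2 + g3 - g1), nat (g1 - 2 * g2 + g3), nat (g1 + g2 - 4 * g3))"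
      by (auto simp: fields communal_alpha_iff generated_def)
    then show "g \<in> range generated" by blast
  qed (auto simp: fields communal_alpha_iff generated_def)
qed

lemma communal_count_alpha_denumerant:
  "communal_count (1/2, 1/3, 1/5) n = card {(a, b, c). 15 * a + 10 * b + 6 * c = n}"
proof -
  have "{(g1, g2, g3). communal (1/2, 1/3, 1/5) (g1, g2, g3) \<and> g1 + g2 + g3 = int n}
          = generated ` {(a, b, c). 15 * a + 10 * b + 6 * c = n}"
  proof (rule set_eqI)
    fix x :: "int \<times> int \<times> int"
    obtain g1 g2 g3 where x: "x = (g1, g2, g3)" by (cases x)
    show "x \<in> {(g1, g2, g3). communal (1/2, 1/3, 1/5) (g1, g2, g3) \<and> g1 + g2 + g3 = int n}
            \<longleftrightarrow> x \<in> generated ` {(a, b, c). 15 * a + 10 * b + 6 * c = n}"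
    proof
      assume "x \<in> {(g1, g2, g3). communal (1/2, 1/3, 1/5) (g1, g2, g3) \<and> g1 + g2 + g3 = int n}"
      then obtain a b c where gen: "generated (a, b, c) = (g1, g2, g3)" and "g1 + g2 + g3 = int n"
        by (auto simp: x communal_alpha_iff_generated)
      then have "15 * a + 10 * b + 6 * c = n" using sum_generated[OF gen] by simp
      then show "x \<in> generated ` {(a, b, c). 15 * a + 10 * b + 6 * c = n}"
        using gen by (auto simp: x intro: rev_image_eqI[of "(a, b, c)"])
    next
      assume "x \<in> generated ` {(a, b, c). 15 * a + 10 * b + 6 * c = n}"
      then obtain a b c where gen: "generated (a, b, c) = (g1, g2, g3)" and "15 * a + 10 * b + 6 * c = n"
        by (auto simp: x)
      moreover have "(g1, g2, g3) \<in> range generated" using gen by (metis rangeI)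
      ultimately show "x \<in> {(g1, g2, g3). communal (1/2, 1/3, 1/5) (g1, g2, g3) \<and> g1 + g2 + g3 = int n}"
        using sum_generated[OF gen] by (simp add: x communal_alpha_iff_generated)
    qed
  qed
  then show ?thesis
    unfolding communal_count_def by (simp add: card_image inj_on_subset[OF inj_generated])
qed

(* A communal triple with sum n is a lattice point of the box with sides
   n div 2, n div 3, n div 5 on the plane of sum n; its deficit is at most n div 5
   because n div 2 + n div 3 <= n. *)
lemma communal_count_alpha_floor:
  "communal_count (1/2, 1/3, 1/5) n =
     nat (int n div 2 + int n div 3 + int n div 5 - int n + 2) choose 2"
proof -
  define s where "s = int n"
  have slice: "{(g1, g2, g3). communal (1/2, 1/3, 1/5) (g1, g2, g3) \<and> g1 + g2 + g3 = s}
      = {(x, y, z). 0 \<le> x \<and> x \<le> s div 2 \<and> 0 \<le> y \<and> y \<le> s div 3 \<and> 0 \<le> z \<and> z \<le> s div 5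
                    \<and> x + y + z = s}"
    by (auto simp: communal_alpha_iff)
  have "2 * (s div 2) \<le> s" "3 * (s div 3) \<le> s" "0 \<le> s" using s_def by linarith+
  then have "s div 2 + s div 3 + s div 5 - s \<le> s div 5" by linarith
  moreover have "s div 5 \<le> s div 3" "s div 3 \<le> s div 2" using s_def by (simp_all add: zdiv_mono2)
  ultimately have "card {(x, y, z). 0 \<le> x \<and> x \<le> s div 2 \<and> 0 \<le> y \<and> y \<le> s div 3
                      \<and> 0 \<le> z \<and> z \<le> s div 5 \<and> x + y + z = s}
                 = nat (s div 2 + s div 3 + s div 5 - s + 2) choose 2"
    by (intro card_box_slice) linarith+
  then show ?thesis unfolding communal_count_def s_def[symmetric] slice .
qed

theorem mainTheorem9:
  defines "\<alpha> \<equiv> (1/2, 1/3, 1/5) :: real \<times> real \<times> real"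
  shows "(\<forall>g1 g2 g3. communal \<alpha> (g1, g2, g3) \<longrightarrow>
            (\<exists>!abc :: nat \<times> nat \<times> nat. case abc of (a, b, c) \<Rightarrow>
               (g1, g2, g3) = (7 * int a + 5 * int b + 3 * int c,
                               5 * int a + 3 * int b + 2 * int c,
                               3 * int a + 2 * int b + int c)))
       \<and> Abs_fps (\<lambda>g. of_nat (communal_count \<alpha> g) :: real)
           = inverse ((1 - fps_X ^ 15) * (1 - fps_X ^ 10) * (1 - fps_X ^ 6))
       \<and> (\<forall>g. communal_count \<alpha> g =
              nat (\<lfloor>real g / 2\<rfloor> + \<lfloor>real g / 3\<rfloor> + \<lfloor>real g / 5\<rfloor> - int g + 2) choose 2)"
proof (intro conjI allI impI)
  fix g1 g2 g3 assume "communal \<alpha> (g1, g2, g3)"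
  then have "(g1, g2, g3) \<in> range generated" by (simp add: \<alpha>_def communal_alpha_iff_generated)
  then show "\<exists>!abc. case abc of (a, b, c) \<Rightarrow>
               (g1, g2, g3) = (7 * int a + 5 * int b + 3 * int c,
                               5 * int a + 3 * int b + 2 * int c,
                               3 * int a + 2 * int b + int c)"
    using inj_generated by (auto simp: generated_def inj_def split: prod.split)
next
  show "Abs_fps (\<lambda>g. of_nat (communal_count \<alpha> g) :: real)
          = inverse ((1 - fps_X ^ 15) * (1 - fps_X ^ 10) * (1 - fps_X ^ 6))"
    using denumerant_fps[of 15 10 6] by (simp add: \<alpha>_def communal_count_alpha_denumerant)
next
  fix g :: nat
  have floor_div: "\<lfloor>real g / numeral k\<rfloor> = int g div numeral k" for k
    using floor_divide_of_int_eq[of "int g" "numeral k", where 'a = real] by simp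
  show "communal_count \<alpha> g =
          nat (\<lfloor>real g / 2\<rfloor> + \<lfloor>real g / 3\<rfloor> + \<lfloor>real g / 5\<rfloor> - int g + 2) choose 2"
    unfolding \<alpha>_def floor_div by (rule communal_count_alpha_floor)
qed

end
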